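(* Let $A$ be a satisfiable EFO branch. Then $A$ has a standard model $\mathcal{I}$ in which $\mathcal{I}\alpha$ is countable for every sort $\alpha$.
   Context: Types: a countable set of base types including a distinguished $o$; other base types are sorts ($\alpha$). Types: base types and $\sigma\tau$ (functions from $\sigma$ to $\tau$; $\sigma\tau\mu=\sigma(\tau\mu)$). Countably many names with unique types, infinitely many per type. Terms: names; $st:\mu$ for $s:\tau\mu,t:\tau$; $\lambda x.t:\sigma\tau$ for a name $x:\sigma$, $t:\tau$. Logical constants: $\neg:oo$, $\to:ooo$, $=_\sigma:\sigma\sigma o$ for every type $\sigma$, and $\forall_\alpha:(\alpha o)o$ for every sort $\alpha$; all other names are variables. Formulas: terms of type $o$; $s\neq_\sigma t$ is $\neg((=_\sigma s)t)$. A term is EFO if the only logical constants occurring in it are $\neg$, $\to$, $=_\alpha$ and $\forall_\alpha$ ($\alpha$ sorts). A formula is quasi-EFO if it is EFO or of the form $s\neq_\sigma t$ with $s,t$ EFO. Semantics: a frame $\mathcal{D}$ maps types to nonempty sets with $\mathcal{D}(\sigma\tau)\subseteq(\mathcal{D}\sigma\to\mathcal{D}\tau)$; standard if $\mathcal{D}(\sigma\tau)=(\mathcal{D}\sigma\to\mathcal{D}\tau)$. An assignment $\mathcal{I}$ into $\mathcal{D}$ extends $\mathcal{D}$ and maps names $x:\sigma$ into $\mathcal{D}\sigma$; $\mathcal{I}^x_a$ is the update. Partial evaluation: $\hat{\mathcal{I}}x=\mathcal{I}x$; $\hat{\mathcal{I}}(st)=(\hat{\mathcal{I}}s)(\hat{\mathcal{I}}t)$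 when defined; $\hat{\mathcal{I}}(\lambda x.s)=f$ if $\lambda x.s:\sigma\tau$, $f\in\mathcal{D}(\sigma\tau)$ and $\widehat{\mathcal{I}^x_a}s=fa$ for all $a\in\mathcal{D}\sigma$. An interpretation is an assignment with total evaluation. Logical: $\mathcal{I}o=\{0,1\}$, $\mathcal{I}(\neg)$ negation, $\mathcal{I}(\to)$ implication, $\mathcal{I}(=_\sigma)$ identity, $\mathcal{I}(\forall_\alpha)f=1$ iff $f$ is the constant function $1$. A set of formulas is satisfiable if some logical interpretation (into an arbitrary frame) evaluates each of them to $1$; a standard model is such a logical assignment into a standard frame. Normalization: fixed type-preserving total $[\cdot]$; $s$ normal iff $[s]=s$; (N1) $[[s]]=[s]$; (N2) $[[s]t]=[st]$; (N3) $[ys_1\dots s_n]=y[s_1]\dots[s_n]$ for a name $y$, $n\ge0$, $ys_1\dots s_n$ of base type; (N4) $\hat{\mathcal{I}}[s]=\hat{\mathcal{I}}s$ for every interpretation. Substitutions: type-preserving partial functions $\theta$ from names to terms ($\theta^x_s$ update), each extending to a type-preserving total $\hat\theta$ with (S1) $\hat\theta x=\theta x$ if $x\in\mathrm{Dom}\theta$, else $x$; (S2) $\hat\theta(st)=(\hat\theta s)(\hat\theta t)$; (S3) $[(\hat\theta(\lambda x.s))t]=[\widehat{\theta^x_t}s]$; (S4) $[\hat\emptyset s]=[s]$. An EFO branch is a set of normal quasi-EFO formulas. *)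

theory Defs
  imports Main "HOL-Library.Countable" "HOL-Library.Countable_Set"
begin

text \<open>Types. Base types are o ('TO') and the sorts ('TB a', with a ranging over
a countable type of sort labels). 'TF s t' is the function type s t.\<close>
datatype 's ty = TO | TB 's | TF "'s ty" "'s ty"

datatype 's name = NNeg | NImp | NEq "'s ty" | NAll 's | NVar "'s ty" nat

fun nty :: "'s name \<Rightarrow> 's ty" where
  "nty NNeg = TF TO TO"
| "nty NImp = TF TO (TF TO TO)"
| "nty (NEq \<sigma>) = TF \<sigma> (TF \<sigma> TO)"
| "nty (NAll a) = TF (TF (TB a) TO) TO"
| "nty (NVar \<sigma> n) = \<sigma>"

definition is_var :: "'s name \<Rightarrow> bool" where
  "is_var x \<longleftrightarrow> (\<exists>\<sigma> n. x = NVar \<sigma> n)"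

datatype 's tm = Nm "'s name" | Ap "'s tm" "'s tm" | Lm "'s name" "'s tm"

text \<open>Type of a (raw) term; None for ill-typed raw terms. Terms of the paper
are the well-typed raw terms.\<close>
fun tyof :: "'s tm \<Rightarrow> 's ty option" where
  "tyof (Nm x) = Some (nty x)"
| "tyof (Ap s t) = (case tyof s of
      Some (TF \<sigma> \<tau>) \<Rightarrow> (if tyof t = Some \<sigma> then Some \<tau> else None)
    | _ \<Rightarrow> None)"
| "tyof (Lm x t) = (case tyof t of Some \<tau> \<Rightarrow> Some (TF (nty x) \<tau>) | None \<Rightarrow> None)"

definition wt :: "'s tm \<Rightarrow> bool" where
  "wt t \<longleftrightarrow> tyof t \<noteq> None"

definition is_base :: "'s ty \<Rightarrow> bool" where
  "is_base \<sigma> \<longleftrightarrow> \<sigma> = TO \<or> (\<exists>a. \<sigma> = TB a)"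

definition formula :: "'s tm \<Rightarrow> bool" where
  "formula t \<longleftrightarrow> tyof t = Some TO"

fun names_of :: "'s tm \<Rightarrow> 's name set" where
  "names_of (Nm x) = {x}"
| "names_of (Ap s t) = names_of s \<union> names_of t"
| "names_of (Lm x t) = insert x (names_of t)"

definition EFO :: "'s tm \<Rightarrow> bool" where
  "EFO t \<longleftrightarrow> wt t \<and> (\<forall>x \<in> names_of t. is_var x \<or> x = NNeg \<or> x = NImp
        \<or> (\<exists>a. x = NEq (TB a)) \<or> (\<exists>a. x = NAll a))"

definition quasi_EFO :: "'s tm \<Rightarrow> bool" where
  "quasi_EFO t \<longleftrightarrow> formula t \<and> (EFO t \<or>
      (\<exists>\<sigma> s u. t = Ap (Nm NNeg) (Ap (Ap (Nm (NEq \<sigma>)) s) u) \<and> EFO s \<and> EFO u))"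

text \<open>The
conditions below make D(s t) (via app) a subset of the functions D s -> D t.\<close>
record ('s, 'u) frame =
  dom :: "'s ty \<Rightarrow> 'u set"
  app :: "'u \<Rightarrow> 'u \<Rightarrow> 'u"
  tv  :: "bool \<Rightarrow> 'u"

definition is_frame :: "('s, 'u) frame \<Rightarrow> bool" where
  "is_frame F \<longleftrightarrow> (\<forall>\<sigma>. dom F \<sigma> \<noteq> {})
     \<and> (\<forall>\<sigma> \<tau> f a. f \<in> dom F (TF \<sigma> \<tau>) \<longrightarrow> a \<in> dom F \<sigma> \<longrightarrow> app F f a \<in> dom F \<tau>)
     \<and> (\<forall>\<sigma> \<tau> f g. f \<in> dom F (TF \<sigma> \<tau>) \<longrightarrow> g \<in> dom F (TF \<sigma> \<tau>)
            \<longrightarrow> (\<forall>a \<in> dom F \<sigma>. app F f a = app F g a) \<longrightarrow> f = g)"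

definition standard :: "('s, 'u) frame \<Rightarrow> bool" where
  "standard F \<longleftrightarrow> is_frame F \<and> (\<forall>\<sigma> \<tau> h. (\<forall>a \<in> dom F \<sigma>. h a \<in> dom F \<tau>)
       \<longrightarrow> (\<exists>f \<in> dom F (TF \<sigma> \<tau>). \<forall>a \<in> dom F \<sigma>. app F f a = h a))"

definition assignment :: "('s, 'u) frame \<Rightarrow> ('s name \<Rightarrow> 'u) \<Rightarrow> bool" where
  "assignment F I \<longleftrightarrow> is_frame F \<and> (\<forall>x. I x \<in> dom F (nty x))"

fun eval :: "('s, 'u) frame \<Rightarrow> ('s name \<Rightarrow> 'u) \<Rightarrow> 's tm \<Rightarrow> 'u option" where
  "eval F I (Nm x) = Some (I x)"
| "eval F I (Ap s t) = (case (eval F I s, eval F I t) of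
      (Some f, Some a) \<Rightarrow> Some (app F f a) | _ \<Rightarrow> None)"
| "eval F I (Lm x s) = (case tyof s of
      None \<Rightarrow> None
    | Some \<tau> \<Rightarrow>
       (if \<exists>f \<in> dom F (TF (nty x) \<tau>). \<forall>a \<in> dom F (nty x). eval F (I(x := a)) s = Some (app F f a)
        then Some (THE f. f \<in> dom F (TF (nty x) \<tau>) \<and>
                 (\<forall>a \<in> dom F (nty x). eval F (I(x := a)) s = Some (app F f a)))
        else None))"

definition is_interp :: "('s, 'u) frame \<Rightarrow> ('s name \<Rightarrow> 'u) \<Rightarrow> bool" where
  "is_interp F I \<longleftrightarrow> assignment F I \<and> (\<forall>t. wt t \<longrightarrow> eval F I t \<noteq> None)"

definition logical :: "('s, 'u) frame \<Rightarrow> ('s name \<Rightarrow> 'u) \<Rightarrow> bool" where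
  "logical F I \<longleftrightarrow> assignment F I \<and> inj (tv F) \<and> dom F TO = range (tv F)
     \<and> (\<forall>b. app F (I NNeg) (tv F b) = tv F (\<not> b))
     \<and> (\<forall>b c. app F (app F (I NImp) (tv F b)) (tv F c) = tv F (b \<longrightarrow> c))
     \<and> (\<forall>\<sigma>. \<forall>a \<in> dom F \<sigma>. \<forall>b \<in> dom F \<sigma>. app F (app F (I (NEq \<sigma>)) a) b = tv F (a = b))
     \<and> (\<forall>\<alpha>. \<forall>f \<in> dom F (TF (TB \<alpha>) TO).
          app F (I (NAll \<alpha>)) f = tv F (\<forall>a \<in> dom F (TB \<alpha>). app F f a = tv F True))"

definition models :: "('s, 'u) frame \<Rightarrow> ('s name \<Rightarrow> 'u) \<Rightarrow> 's tm set \<Rightarrow> bool" where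
  "models F I A \<longleftrightarrow> (\<forall>s \<in> A. eval F I s = Some (tv F True))"

definition satisfied_in :: "'u itself \<Rightarrow> 's tm set \<Rightarrow> bool" where
  "satisfied_in U A \<longleftrightarrow> (\<exists>(F :: ('s, 'u) frame) I. is_interp F I \<and> logical F I \<and> models F I A)"

definition standard_model :: "('s, 'u) frame \<Rightarrow> ('s name \<Rightarrow> 'u) \<Rightarrow> 's tm set \<Rightarrow> bool" where
  "standard_model F I A \<longleftrightarrow> standard F \<and> logical F I \<and> models F I A"

text \<open>N1--N3 and type preservation; N4 is carrier-dependent and stated for
interpretations over the carrier type 'u.\<close>
definition norm_syntactic :: "('s tm \<Rightarrow> 's tm) \<Rightarrow> bool" where
  "norm_syntactic nf \<longleftrightarrow>
     (\<forall>s. wt s \<longrightarrow> tyof (nf s) = tyof s)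
   \<and> (\<forall>s. wt s \<longrightarrow> nf (nf s) = nf s)
   \<and> (\<forall>s t. wt (Ap s t) \<longrightarrow> nf (Ap (nf s) t) = nf (Ap s t))
   \<and> (\<forall>y ss. wt (foldl Ap (Nm y) ss) \<longrightarrow> (\<exists>\<sigma>. tyof (foldl Ap (Nm y) ss) = Some \<sigma> \<and> is_base \<sigma>)
        \<longrightarrow> nf (foldl Ap (Nm y) ss) = foldl Ap (Nm y) (map nf ss))"

definition norm_sound :: "'u itself \<Rightarrow> ('s tm \<Rightarrow> 's tm) \<Rightarrow> bool" where
  "norm_sound U nf \<longleftrightarrow> (\<forall>(F :: ('s, 'u) frame) I s. is_interp F I \<longrightarrow> wt s
        \<longrightarrow> eval F I (nf s) = eval F I s)"

definition type_pres_subst :: "('s name \<Rightarrow> 's tm option) \<Rightarrow> bool" where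
  "type_pres_subst \<theta> \<longleftrightarrow> (\<forall>x t. \<theta> x = Some t \<longrightarrow> tyof t = Some (nty x))"

definition subst_ok :: "('s tm \<Rightarrow> 's tm) \<Rightarrow> (('s name \<Rightarrow> 's tm option) \<Rightarrow> 's tm \<Rightarrow> 's tm) \<Rightarrow> bool" where
  "subst_ok nf sb \<longleftrightarrow> (\<forall>\<theta>. type_pres_subst \<theta> \<longrightarrow>
       (\<forall>s. wt s \<longrightarrow> tyof (sb \<theta> s) = tyof s)
     \<and> (\<forall>x. sb \<theta> (Nm x) = (case \<theta> x of Some t \<Rightarrow> t | None \<Rightarrow> Nm x))
     \<and> (\<forall>s t. wt (Ap s t) \<longrightarrow> sb \<theta> (Ap s t) = Ap (sb \<theta> s) (sb \<theta> t))
     \<and> (\<forall>x s t. wt (Lm x s) \<longrightarrow> tyof t = Some (nty x)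
          \<longrightarrow> nf (Ap (sb \<theta> (Lm x s)) t) = nf (sb (\<theta>(x \<mapsto> t)) s)))
   \<and> (\<forall>s. wt s \<longrightarrow> nf (sb Map.empty s) = nf s)"

definition EFO_branch :: "('s tm \<Rightarrow> 's tm) \<Rightarrow> 's tm set \<Rightarrow> bool" where
  "EFO_branch nf A \<longleftrightarrow> (\<forall>s \<in> A. quasi_EFO s \<and> nf s = s)"

text \<open>The carrier type 'u is large enough to host a standard frame (with the
two truth values in D o) over any prescribed countable nonempty sort domains.\<close>
definition hosts_standard_frames :: "'u itself \<Rightarrow> 's::countable itself \<Rightarrow> bool" where
  "hosts_standard_frames U S \<longleftrightarrow> (\<forall>c :: 's \<Rightarrow> nat set. (\<forall>a. c a \<noteq> {}) \<longrightarrow>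
     (\<exists>F :: ('s, 'u) frame. standard F \<and> inj (tv F) \<and> dom F TO = range (tv F)
        \<and> (\<forall>a. \<exists>g. bij_betw g (c a) (dom F (TB a)))))"

end

theory Submission
  imports Defs "HOL-Analysis.Finite_Cartesian_Product"
begin

text \<open>
  Let a logical interpretation H satisfy the branch. Inside H we carve out countable subdomains
  D(\<sigma>) \<subseteq> H(\<sigma>) that contain the values of all names and both truth values, are closed
  under evaluation of terms, and contain, for any two distinct functions of D(\<sigma>\<tau>), a point
  of D(\<sigma>) separating them, and for any predicate of D(\<sigma>o) failing somewhere, a point of D(\<sigma>)
  where it fails. Now take a standard frame whose sort domains are in bijection \<psi> with the D(\<alpha>),
  and relate it to D by the logical relation that is \<psi> at sorts, the identity on truth values at
  o, and preservation of the relation at function types. The separating points make this relation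
  right-unique, the closure under evaluation makes it total on D, and the counterexample points
  let it respect universal quantification over sorts; equality is interpreted correctly at sorts
  because \<psi> is a bijection there. Hence every EFO term evaluates to related values in both
  models, and a true quasi-EFO formula of H, a disequation at any type included, is true in the
  standard model.
\<close>

instance ty :: (countable) countable by countable_datatype
instance name :: (countable) countable by countable_datatype
instance tm :: (countable) countable by countable_datatype

section \<open>Evaluation\<close>

lemma finite_names_of: "finite (names_of t)"
  by (induction t) auto

lemma eval_cong: "(\<And>x. x \<in> names_of t \<Longrightarrow> J x = J' x) \<Longrightarrow> eval F J t = eval F J' t"
proof (induction t arbitrary: J J')
  case (Ap s u)
  have "eval F J s = eval F J' s" by (rule Ap.IH(1)) (simp add: Ap.prems)
  moreover have "eval F J u = eval F J' u" by (rule Ap.IH(2)) (simp add: Ap.prems)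
  ultimately show ?case by simp
next
  case (Lm x s)
  have body: "\<And>a. eval F (J(x := a)) s = eval F (J'(x := a)) s"
    by (rule Lm.IH) (simp add: Lm.prems)
  show ?case unfolding eval.simps body ..
qed simp

lemma eval_Lm_eqI:
  assumes fr: "is_frame F" and ty: "tyof s = Some \<tau>" and f: "f \<in> dom F (TF (nty x) \<tau>)"
    and body: "\<forall>a\<in>dom F (nty x). eval F (J(x := a)) s = Some (app F f a)"
  shows "eval F J (Lm x s) = Some f"
proof -
  have "g = f" if g: "g \<in> dom F (TF (nty x) \<tau>)"
    and g_body: "\<forall>a\<in>dom F (nty x). eval F (J(x := a)) s = Some (app F g a)" for g
  proof -
    have "\<forall>a\<in>dom F (nty x). app F g a = app F f a" using g_body body by force
    then show ?thesis using fr g f unfolding is_frame_def by blast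
  qed
  then have "(THE g. g \<in> dom F (TF (nty x) \<tau>)
      \<and> (\<forall>a\<in>dom F (nty x). eval F (J(x := a)) s = Some (app F g a))) = f"
    using f body by (intro the_equality) auto
  then show ?thesis using ty f body by auto
qed

lemma eval_LmD:
  assumes fr: "is_frame F" and ty: "tyof s = Some \<tau>" and e: "eval F J (Lm x s) = Some f"
  shows "f \<in> dom F (TF (nty x) \<tau>)"
    and "\<forall>a\<in>dom F (nty x). eval F (J(x := a)) s = Some (app F f a)"
proof -
  from e ty obtain f' where f': "f' \<in> dom F (TF (nty x) \<tau>)"
      "\<forall>a\<in>dom F (nty x). eval F (J(x := a)) s = Some (app F f' a)"
    by (auto split: if_splits)
  moreover have "f' = f" using eval_Lm_eqI[OF fr ty f'] e by simp
  ultimately show "f \<in> dom F (TF (nty x) \<tau>)"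
    and "\<forall>a\<in>dom F (nty x). eval F (J(x := a)) s = Some (app F f a)" by auto
qed

lemma tyof_ApE:
  assumes "tyof (Ap s u) = Some \<tau>"
  obtains \<sigma> where "tyof s = Some (TF \<sigma> \<tau>)" and "tyof u = Some \<sigma>"
  using assms by (auto split: option.splits ty.splits if_splits)

lemma tyof_LmE:
  assumes "tyof (Lm x s) = Some \<sigma>"
  obtains \<tau> where "tyof s = Some \<tau>" and "\<sigma> = TF (nty x) \<tau>"
  using assms by (auto split: option.splits)

lemma frame_app_in_dom:
  "is_frame F \<Longrightarrow> f \<in> dom F (TF \<sigma> \<tau>) \<Longrightarrow> a \<in> dom F \<sigma> \<Longrightarrow> app F f a \<in> dom F \<tau>"
  unfolding is_frame_def by blast

lemma eval_in_dom:
  assumes fr: "is_frame F"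
  shows "tyof t = Some \<sigma> \<Longrightarrow> \<forall>x\<in>names_of t. J x \<in> dom F (nty x) \<Longrightarrow> eval F J t = Some v
    \<Longrightarrow> v \<in> dom F \<sigma>"
proof (induction t arbitrary: J \<sigma> v)
  case (Ap s u)
  obtain \<sigma>' where ts: "tyof s = Some (TF \<sigma>' \<sigma>)" and tu: "tyof u = Some \<sigma>'"
    using Ap.prems(1) by (rule tyof_ApE)
  obtain f a where f: "eval F J s = Some f" and a: "eval F J u = Some a" and v: "v = app F f a"
    using Ap.prems(3) by (auto split: option.splits)
  have "f \<in> dom F (TF \<sigma>' \<sigma>)" using Ap.IH(1)[OF ts _ f] Ap.prems(2) by simp
  moreover have "a \<in> dom F \<sigma>'" using Ap.IH(2)[OF tu _ a] Ap.prems(2) by simp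
  ultimately show ?case unfolding v by (rule frame_app_in_dom[OF fr])
next
  case (Lm x s)
  then show ?case using eval_LmD(1)[OF fr] by (metis tyof_LmE)
qed simp

lemma standard_fun:
  assumes "standard F" and "\<And>a. a \<in> dom F \<sigma> \<Longrightarrow> h a \<in> dom F \<tau>"
  shows "\<exists>f\<in>dom F (TF \<sigma> \<tau>). \<forall>a\<in>dom F \<sigma>. app F f a = h a"
  using assms unfolding standard_def by blast

lemma standard_fun2:
  assumes st: "standard F" and k: "\<And>a b. a \<in> dom F \<sigma> \<Longrightarrow> b \<in> dom F \<tau> \<Longrightarrow> k a b \<in> dom F \<rho>"
  shows "\<exists>f\<in>dom F (TF \<sigma> (TF \<tau> \<rho>)). \<forall>a\<in>dom F \<sigma>. \<forall>b\<in>dom F \<tau>. app F (app F f a) b = k a b"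
proof -
  have "\<exists>g\<in>dom F (TF \<tau> \<rho>). \<forall>b\<in>dom F \<tau>. app F g b = k a b" if "a \<in> dom F \<sigma>" for a
    using standard_fun[OF st] k that by blast
  then obtain h where h: "\<And>a. a \<in> dom F \<sigma> \<Longrightarrow>
      h a \<in> dom F (TF \<tau> \<rho>) \<and> (\<forall>b\<in>dom F \<tau>. app F (h a) b = k a b)"
    by metis
  moreover obtain f where "f \<in> dom F (TF \<sigma> (TF \<tau> \<rho>))" "\<forall>a\<in>dom F \<sigma>. app F f a = h a"
    using standard_fun[OF st, of \<sigma> h] h by blast
  ultimately show ?thesis by (intro bexI[of _ f]) auto
qed

lemma standard_eval_defined:
  assumes st: "standard F"
  shows "tyof t = Some \<sigma> \<Longrightarrow> \<forall>x\<in>names_of t. J x \<in> dom F (nty x) \<Longrightarrow> eval F J t \<noteq> None"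
proof (induction t arbitrary: J \<sigma>)
  case (Ap s u)
  then show ?case by (elim tyof_ApE) (fastforce split: option.splits)
next
  case (Lm x s)
  have fr: "is_frame F" using st unfolding standard_def by blast
  obtain \<tau> where ts: "tyof s = Some \<tau>" using Lm.prems(1) by (rule tyof_LmE)
  define h where "h a = the (eval F (J(x := a)) s)" for a
  have h: "eval F (J(x := a)) s = Some (h a) \<and> h a \<in> dom F \<tau>" if "a \<in> dom F (nty x)" for a
  proof -
    have J: "\<forall>y\<in>names_of s. (J(x := a)) y \<in> dom F (nty y)" using that Lm.prems(2) by auto
    then have "eval F (J(x := a)) s = Some (h a)" using Lm.IH[OF ts] by (auto simp: h_def)
    with eval_in_dom[OF fr ts J] show ?thesis by blast
  qed
  then obtain f where "f \<in> dom F (TF (nty x) \<tau>)" "\<forall>a\<in>dom F (nty x). app F f a = h a"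
    using standard_fun[OF st] by blast
  then show ?case using eval_Lm_eqI[OF fr ts] h by simp
qed simp

text \<open>An interpretation need not be standard, but its total evaluation extends to every
  assignment into the frame: evaluating the \<open>\<lambda>\<close>-closure of a term over its names exposes the
  term's value under any values of those names.\<close>

lemma wt_foldr_Lm: "wt t \<Longrightarrow> wt (foldr Lm ns t)"
  unfolding wt_def by (induction ns) (auto split: option.splits)

lemma eval_foldr_Lm_defined:
  assumes fr: "is_frame F" and t: "wt t"
  shows "eval F K (foldr Lm ns t) \<noteq> None \<Longrightarrow> \<forall>x\<in>set ns. J x \<in> dom F (nty x)
    \<Longrightarrow> \<forall>x. x \<notin> set ns \<longrightarrow> J x = K x \<Longrightarrow> eval F J t \<noteq> None"
proof (induction ns arbitrary: K)
  case Nil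
  then have "J = K" by auto
  with Nil show ?case by simp
next
  case (Cons n ns)
  obtain \<tau> where ty: "tyof (foldr Lm ns t) = Some \<tau>"
    using wt_foldr_Lm[OF t] unfolding wt_def by blast
  obtain f where "eval F K (Lm n (foldr Lm ns t)) = Some f" using Cons.prems(1) by auto
  then have "eval F (K(n := J n)) (foldr Lm ns t) \<noteq> None"
    using eval_LmD(2)[OF fr ty] Cons.prems(2) by simp
  moreover have "\<forall>x\<in>set ns. J x \<in> dom F (nty x)" using Cons.prems(2) by simp
  moreover have "\<forall>x. x \<notin> set ns \<longrightarrow> J x = (K(n := J n)) x" using Cons.prems(3) by simp
  ultimately show ?case by (rule Cons.IH)
qed

lemma interp_eval_defined:
  assumes I: "is_interp F I" and t: "wt t" and J: "\<forall>x\<in>names_of t. J x \<in> dom F (nty x)"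
  shows "eval F J t \<noteq> None"
proof -
  have fr: "is_frame F" using I unfolding is_interp_def assignment_def by blast
  obtain ns where ns: "set ns = names_of t" using finite_list[OF finite_names_of] by blast
  define J' where "J' x = (if x \<in> names_of t then J x else I x)" for x
  have "eval F I (foldr Lm ns t) \<noteq> None" using I wt_foldr_Lm[OF t] unfolding is_interp_def by blast
  moreover have "\<forall>x\<in>set ns. J' x \<in> dom F (nty x)" "\<forall>x. x \<notin> set ns \<longrightarrow> J' x = I x"
    using J ns by (simp_all add: J'_def)
  ultimately have "eval F J' t \<noteq> None" by (rule eval_foldr_Lm_defined[OF fr t])
  moreover have "eval F J t = eval F J' t" by (rule eval_cong) (simp add: J'_def)
  ultimately show ?thesis by simp
qed

section \<open>Logical assignments\<close>

lemma logical_assignment: "logical F I \<Longrightarrow> assignment F I"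
  unfolding logical_def by blast

lemma logical_tv_inj: "logical F I \<Longrightarrow> tv F p = tv F q \<longleftrightarrow> p = q"
  unfolding logical_def by (auto dest: injD)

lemma logical_dom_TO: "logical F I \<Longrightarrow> dom F TO = range (tv F)"
  unfolding logical_def by blast

lemma logical_neg: "logical F I \<Longrightarrow> app F (I NNeg) (tv F p) = tv F (\<not> p)"
  unfolding logical_def by blast

lemma logical_imp: "logical F I \<Longrightarrow> app F (app F (I NImp) (tv F p)) (tv F q) = tv F (p \<longrightarrow> q)"
  unfolding logical_def by blast

lemma logical_eq:
  "logical F I \<Longrightarrow> a \<in> dom F \<sigma> \<Longrightarrow> b \<in> dom F \<sigma> \<Longrightarrow> app F (app F (I (NEq \<sigma>)) a) b = tv F (a = b)"
  unfolding logical_def by blast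

lemma logical_all:
  "logical F I \<Longrightarrow> f \<in> dom F (TF (TB \<alpha>) TO)
    \<Longrightarrow> app F (I (NAll \<alpha>)) f = tv F (\<forall>a\<in>dom F (TB \<alpha>). app F f a = tv F True)"
  unfolding logical_def by blast

lemma standard_logical_extension:
  assumes st: "standard F" and tv: "inj (tv F)" "dom F TO = range (tv F)"
    and J: "\<And>\<sigma> n. J (NVar \<sigma> n) \<in> dom F \<sigma>"
  obtains I where "logical F I" and "\<And>\<sigma> n. I (NVar \<sigma> n) = J (NVar \<sigma> n)"
proof -
  have fr: "is_frame F" using st unfolding standard_def by blast
  have tv_eq: "tv F p = tv F q \<longleftrightarrow> p = q" for p q using tv(1) by (auto dest: injD)
  have tv_dom: "tv F p \<in> dom F TO" for p using tv(2) by blast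
  obtain fneg where fneg: "fneg \<in> dom F (TF TO TO)"
      "\<forall>a\<in>dom F TO. app F fneg a = tv F (a \<noteq> tv F True)"
    using standard_fun[OF st, of TO "\<lambda>a. tv F (a \<noteq> tv F True)"] tv_dom by blast
  obtain fimp where fimp: "fimp \<in> dom F (TF TO (TF TO TO))"
      "\<forall>a\<in>dom F TO. \<forall>c\<in>dom F TO. app F (app F fimp a) c = tv F (a = tv F True \<longrightarrow> c = tv F True)"
    using standard_fun2[OF st, of TO TO "\<lambda>a c. tv F (a = tv F True \<longrightarrow> c = tv F True)"] tv_dom
    by blast
  have "\<forall>\<sigma>. \<exists>f. f \<in> dom F (TF \<sigma> (TF \<sigma> TO))
      \<and> (\<forall>a\<in>dom F \<sigma>. \<forall>b\<in>dom F \<sigma>. app F (app F f a) b = tv F (a = b))"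
    using standard_fun2[OF st, of _ _ "\<lambda>a b. tv F (a = b)" TO] tv_dom by blast
  then obtain feq where feq: "\<forall>\<sigma>. feq \<sigma> \<in> dom F (TF \<sigma> (TF \<sigma> TO))
      \<and> (\<forall>a\<in>dom F \<sigma>. \<forall>b\<in>dom F \<sigma>. app F (app F (feq \<sigma>) a) b = tv F (a = b))"
    by (rule choice[THEN exE])
  have "\<forall>\<alpha>. \<exists>f. f \<in> dom F (TF (TF (TB \<alpha>) TO) TO) \<and> (\<forall>g\<in>dom F (TF (TB \<alpha>) TO).
      app F f g = tv F (\<forall>a\<in>dom F (TB \<alpha>). app F g a = tv F True))"
    using standard_fun[OF st, of "TF (TB _) TO" "\<lambda>g. tv F (\<forall>a\<in>dom F (TB _). app F g a = tv F True)"]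
      tv_dom by blast
  then obtain fall where fall: "\<forall>\<alpha>. fall \<alpha> \<in> dom F (TF (TF (TB \<alpha>) TO) TO) \<and> (\<forall>g\<in>dom F (TF (TB \<alpha>) TO).
      app F (fall \<alpha>) g = tv F (\<forall>a\<in>dom F (TB \<alpha>). app F g a = tv F True))"
    by (rule choice[THEN exE])
  define I where "I x = (case x of NNeg \<Rightarrow> fneg | NImp \<Rightarrow> fimp | NEq \<sigma> \<Rightarrow> feq \<sigma>
    | NAll \<alpha> \<Rightarrow> fall \<alpha> | NVar \<sigma> n \<Rightarrow> J x)" for x
  have "assignment F I"
  proof -
    have "I x \<in> dom F (nty x)" for x
      by (cases x) (simp_all add: I_def fneg fimp feq fall J)
    then show ?thesis unfolding assignment_def using fr by blast
  qed
  moreover have "app F (I NNeg) (tv F p) = tv F (\<not> p)" for p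
    using fneg(2) tv_dom by (simp add: I_def tv_eq)
  moreover have "app F (app F (I NImp) (tv F p)) (tv F q) = tv F (p \<longrightarrow> q)" for p q
    using fimp(2) tv_dom by (simp add: I_def tv_eq)
  ultimately have "logical F I"
    unfolding logical_def using tv feq fall by (simp add: I_def)
  then show thesis by (rule that) (simp add: I_def)
qed

section \<open>A countable subframe\<close>

definition seed_dom :: "('s, 'v) frame \<Rightarrow> ('s name \<Rightarrow> 'v) \<Rightarrow> 's ty \<Rightarrow> 'v set" where
  "seed_dom F I \<sigma> = I ` {x. nty x = \<sigma>} \<union> (if \<sigma> = TO then range (tv F) else {})"

definition eval_closure :: "('s, 'v) frame \<Rightarrow> ('s ty \<Rightarrow> 'v set) \<Rightarrow> 's ty \<Rightarrow> 'v set" where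
  "eval_closure F X \<sigma> = {v. \<exists>t J. tyof t = Some \<sigma> \<and> (\<forall>x\<in>names_of t. J x \<in> X (nty x))
      \<and> eval F J t = Some v}"

definition separating_points :: "('s, 'v) frame \<Rightarrow> ('s ty \<Rightarrow> 'v set) \<Rightarrow> 's ty \<Rightarrow> 'v set" where
  "separating_points F X \<sigma> = (\<lambda>(\<tau>, g, g'). SOME b. b \<in> dom F \<sigma> \<and> app F g b \<noteq> app F g' b) `
      {(\<tau>, g, g'). g \<in> X (TF \<sigma> \<tau>) \<and> g' \<in> X (TF \<sigma> \<tau>) \<and> (\<exists>b\<in>dom F \<sigma>. app F g b \<noteq> app F g' b)}"

definition counterexample_points :: "('s, 'v) frame \<Rightarrow> ('s ty \<Rightarrow> 'v set) \<Rightarrow> 's ty \<Rightarrow> 'v set" where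
  "counterexample_points F X \<sigma> = (\<lambda>g. SOME b. b \<in> dom F \<sigma> \<and> app F g b \<noteq> tv F True) `
      {g \<in> X (TF \<sigma> TO). \<exists>b\<in>dom F \<sigma>. app F g b \<noteq> tv F True}"

definition closure_step :: "('s, 'v) frame \<Rightarrow> ('s ty \<Rightarrow> 'v set) \<Rightarrow> 's ty \<Rightarrow> 'v set" where
  "closure_step F X \<sigma> =
     X \<sigma> \<union> eval_closure F X \<sigma> \<union> separating_points F X \<sigma> \<union> counterexample_points F X \<sigma>"

lemma countable_eval_closure:
  fixes X :: "'s::countable ty \<Rightarrow> 'v set"
  assumes "\<And>\<sigma>. countable (X \<sigma>)"
  shows "countable (eval_closure F X \<sigma>)"
proof -
  have "eval_closure F X \<sigma> \<subseteq> (\<Union>t. (\<lambda>J. the (eval F J t)) ` (\<Pi>\<^sub>E x\<in>names_of t. X (nty x)))"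
  proof
    fix v assume "v \<in> eval_closure F X \<sigma>"
    then obtain t J where J: "\<forall>x\<in>names_of t. J x \<in> X (nty x)" and v: "eval F J t = Some v"
      unfolding eval_closure_def by blast
    have "v = the (eval F (restrict J (names_of t)) t)"
      using v eval_cong[of t "restrict J (names_of t)" J] by simp
    moreover have "restrict J (names_of t) \<in> (\<Pi>\<^sub>E x\<in>names_of t. X (nty x))" using J by simp
    ultimately show "v \<in> (\<Union>t. (\<lambda>J. the (eval F J t)) ` (\<Pi>\<^sub>E x\<in>names_of t. X (nty x)))"
      by (intro UN_I[OF UNIV_I] image_eqI)
  qed
  moreover have "countable (\<Union>t. (\<lambda>J. the (eval F J t)) ` (\<Pi>\<^sub>E x\<in>names_of t. X (nty x)))"
    by (intro countable_UN[OF countableI_type] countable_image countable_PiE finite_names_of assms)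
  ultimately show ?thesis by (rule countable_subset)
qed

lemma countable_closure_step:
  fixes X :: "'s::countable ty \<Rightarrow> 'v set"
  assumes X: "\<And>\<sigma>. countable (X \<sigma>)"
  shows "countable (closure_step F X \<sigma>)"
proof -
  let ?B = "\<Union>\<tau>. X \<tau>"
  have "{(\<tau>, g, g'). g \<in> X (TF \<sigma> \<tau>) \<and> g' \<in> X (TF \<sigma> \<tau>) \<and> (\<exists>b\<in>dom F \<sigma>. app F g b \<noteq> app F g' b)}
      \<subseteq> (UNIV :: 's ty set) \<times> ?B \<times> ?B"
    by blast
  moreover have "countable ((UNIV :: 's ty set) \<times> ?B \<times> ?B)" using X by auto
  ultimately have "countable (separating_points F X \<sigma>)"
    unfolding separating_points_def by (blast intro: countable_image countable_subset)
  moreover have "countable (counterexample_points F X \<sigma>)"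
    unfolding counterexample_points_def using X[of "TF \<sigma> TO"] by simp
  ultimately show ?thesis
    unfolding closure_step_def using X countable_eval_closure[OF X] by auto
qed

lemma closure_step_subset_dom:
  assumes fr: "is_frame F" and X: "\<And>\<tau>. X \<tau> \<subseteq> dom F \<tau>"
  shows "closure_step F X \<sigma> \<subseteq> dom F \<sigma>"
proof -
  have "eval_closure F X \<sigma> \<subseteq> dom F \<sigma>"
  proof
    fix v assume "v \<in> eval_closure F X \<sigma>"
    then obtain t J where t: "tyof t = Some \<sigma>" "\<forall>x\<in>names_of t. J x \<in> X (nty x)"
      "eval F J t = Some v"
      unfolding eval_closure_def by blast
    moreover have "\<forall>x\<in>names_of t. J x \<in> dom F (nty x)" using t(2) X by blast
    ultimately show "v \<in> dom F \<sigma>" using eval_in_dom[OF fr] by blast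
  qed
  moreover have "separating_points F X \<sigma> \<subseteq> dom F \<sigma>" "counterexample_points F X \<sigma> \<subseteq> dom F \<sigma>"
    unfolding separating_points_def counterexample_points_def
    by (auto intro!: someI2_bex[where Q = "\<lambda>b. b \<in> dom F \<sigma>"])
  ultimately show ?thesis unfolding closure_step_def using X by blast
qed

locale logical_interp =
  fixes F :: "('s::countable, 'v) frame" and I :: "'s name \<Rightarrow> 'v"
  assumes interp: "is_interp F I" and logical: "logical F I"
begin

lemma frame: "is_frame F"
  using interp unfolding is_interp_def assignment_def by blast

definition stage :: "nat \<Rightarrow> 's ty \<Rightarrow> 'v set" where
  "stage n = (closure_step F ^^ n) (seed_dom F I)"

definition sub_dom :: "'s ty \<Rightarrow> 'v set" where
  "sub_dom \<sigma> = (\<Union>n. stage n \<sigma>)"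

lemma stage_Suc: "stage (Suc n) = closure_step F (stage n)"
  by (simp add: stage_def)

lemma stage_mono: "m \<le> n \<Longrightarrow> stage m \<sigma> \<subseteq> stage n \<sigma>"
proof (rule lift_Suc_mono_le[of "\<lambda>k. stage k \<sigma>"])
  show "stage k \<sigma> \<subseteq> stage (Suc k) \<sigma>" for k
    unfolding stage_Suc closure_step_def by blast
qed

lemma countable_sub_dom: "countable (sub_dom \<sigma>)"
proof -
  have "countable (stage n \<sigma>)" for n
  proof (induction n arbitrary: \<sigma>)
    case 0
    have "countable (I ` {x. nty x = \<sigma>})" by (rule countable_image) simp
    moreover have "countable (range (tv F))" by (rule countable_image) simp
    ultimately show ?case by (simp add: stage_def seed_dom_def)
  next
    case (Suc n)
    then show ?case unfolding stage_Suc by (rule countable_closure_step)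
  qed
  then show ?thesis unfolding sub_dom_def by (intro countable_UN[OF countableI_type])
qed

lemma sub_dom_subset_dom: "sub_dom \<sigma> \<subseteq> dom F \<sigma>"
proof -
  have "stage n \<sigma> \<subseteq> dom F \<sigma>" for n
  proof (induction n arbitrary: \<sigma>)
    case 0
    have "I x \<in> dom F (nty x)" for x
      using logical_assignment[OF logical] unfolding assignment_def by blast
    then have "I ` {x. nty x = \<sigma>} \<subseteq> dom F \<sigma>" by auto
    moreover have "range (tv F) \<subseteq> dom F TO" using logical_dom_TO[OF logical] by simp
    ultimately show ?case unfolding stage_def seed_dom_def by auto
  next
    case (Suc n)
    then show ?case unfolding stage_Suc by (rule closure_step_subset_dom[OF frame])
  qed
  then show ?thesis unfolding sub_dom_def by blast
qed

lemma seed_dom_subset_sub_dom: "seed_dom F I \<sigma> \<subseteq> sub_dom \<sigma>"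
proof -
  have "stage 0 \<sigma> \<subseteq> sub_dom \<sigma>" unfolding sub_dom_def by blast
  then show ?thesis by (simp add: stage_def)
qed

lemma interp_in_sub_dom: "I x \<in> sub_dom (nty x)"
proof -
  have "I x \<in> seed_dom F I (nty x)" unfolding seed_dom_def by (intro UnI1 imageI) simp
  then show ?thesis by (rule subsetD[OF seed_dom_subset_sub_dom])
qed

lemma tv_in_sub_dom: "tv F p \<in> sub_dom TO"
proof -
  have "tv F p \<in> seed_dom F I TO" by (simp add: seed_dom_def)
  then show ?thesis by (rule subsetD[OF seed_dom_subset_sub_dom])
qed

lemma finite_set_in_stage:
  assumes "finite N" and "\<forall>x\<in>N. J x \<in> sub_dom (nty x)"
  shows "\<exists>n. \<forall>x\<in>N. J x \<in> stage n (nty x)"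
  using assms
proof (induction N rule: finite_induct)
  case (insert y N)
  obtain n where n: "\<forall>x\<in>N. J x \<in> stage n (nty x)" using insert.IH insert.prems by blast
  obtain m where m: "J y \<in> stage m (nty y)" using insert.prems unfolding sub_dom_def by blast
  have "stage n \<sigma> \<subseteq> stage (max n m) \<sigma>" "stage m \<sigma> \<subseteq> stage (max n m) \<sigma>" for \<sigma>
    by (simp_all add: stage_mono)
  then have "\<forall>x\<in>insert y N. J x \<in> stage (max n m) (nty x)" using n m by blast
  then show ?case ..
qed simp

lemma eval_in_sub_dom:
  assumes t: "tyof t = Some \<sigma>" and J: "\<forall>x\<in>names_of t. J x \<in> sub_dom (nty x)"
    and v: "eval F J t = Some v"
  shows "v \<in> sub_dom \<sigma>"
proof -
  obtain n where "\<forall>x\<in>names_of t. J x \<in> stage n (nty x)"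
    using finite_set_in_stage[OF finite_names_of J] by blast
  then have "v \<in> eval_closure F (stage n) \<sigma>" unfolding eval_closure_def using t v by blast
  then have "v \<in> stage (Suc n) \<sigma>" by (simp add: stage_Suc closure_step_def)
  then show ?thesis unfolding sub_dom_def by blast
qed

lemma app_in_sub_dom:
  assumes g: "g \<in> sub_dom (TF \<sigma> \<tau>)" and b: "b \<in> sub_dom \<sigma>"
  shows "app F g b \<in> sub_dom \<tau>"
proof (rule eval_in_sub_dom)
  let ?x = "NVar (TF \<sigma> \<tau>) 0" and ?y = "NVar \<sigma> 1"
  show "tyof (Ap (Nm ?x) (Nm ?y)) = Some \<tau>" by simp
  show "\<forall>z\<in>names_of (Ap (Nm ?x) (Nm ?y)). ((\<lambda>_. g)(?y := b)) z \<in> sub_dom (nty z)"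
    using g b by simp
  show "eval F ((\<lambda>_. g)(?y := b)) (Ap (Nm ?x) (Nm ?y)) = Some (app F g b)" by simp
qed

lemma sub_dom_ext:
  assumes g: "g \<in> sub_dom (TF \<sigma> \<tau>)" and g': "g' \<in> sub_dom (TF \<sigma> \<tau>)"
    and eq: "\<forall>b\<in>sub_dom \<sigma>. app F g b = app F g' b"
  shows "g = g'"
proof (rule ccontr)
  assume "g \<noteq> g'"
  then have ex: "\<exists>b\<in>dom F \<sigma>. app F g b \<noteq> app F g' b"
    using frame g g' sub_dom_subset_dom unfolding is_frame_def by blast
  define b where "b = (SOME b. b \<in> dom F \<sigma> \<and> app F g b \<noteq> app F g' b)"
  have b: "app F g b \<noteq> app F g' b"
    using someI_ex[of "\<lambda>b. b \<in> dom F \<sigma> \<and> app F g b \<noteq> app F g' b"] ex unfolding b_def by blast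
  obtain m n where "g \<in> stage m (TF \<sigma> \<tau>)" "g' \<in> stage n (TF \<sigma> \<tau>)"
    using g g' unfolding sub_dom_def by blast
  then have "g \<in> stage (max m n) (TF \<sigma> \<tau>)" "g' \<in> stage (max m n) (TF \<sigma> \<tau>)"
    using stage_mono[of m "max m n" "TF \<sigma> \<tau>"] stage_mono[of n "max m n" "TF \<sigma> \<tau>"] by auto
  then have "b \<in> separating_points F (stage (max m n)) \<sigma>"
    unfolding separating_points_def b_def using ex by (intro image_eqI[of _ _ "(\<tau>, g, g')"]) simp_all
  then have "b \<in> stage (Suc (max m n)) \<sigma>" by (simp add: stage_Suc closure_step_def)
  then have "b \<in> sub_dom \<sigma>" unfolding sub_dom_def by blast
  with eq b show False by blast
qed

lemma sub_dom_counterexample: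
  assumes g: "g \<in> sub_dom (TF \<sigma> TO)" and all: "\<forall>b\<in>sub_dom \<sigma>. app F g b = tv F True"
  shows "\<forall>b\<in>dom F \<sigma>. app F g b = tv F True"
proof (rule ccontr)
  assume "\<not> (\<forall>b\<in>dom F \<sigma>. app F g b = tv F True)"
  then have ex: "\<exists>b\<in>dom F \<sigma>. app F g b \<noteq> tv F True" by blast
  define b where "b = (SOME b. b \<in> dom F \<sigma> \<and> app F g b \<noteq> tv F True)"
  have b: "app F g b \<noteq> tv F True"
    using someI_ex[of "\<lambda>b. b \<in> dom F \<sigma> \<and> app F g b \<noteq> tv F True"] ex unfolding b_def by blast
  obtain n where "g \<in> stage n (TF \<sigma> TO)" using g unfolding sub_dom_def by blast
  then have "b \<in> counterexample_points F (stage n) \<sigma>"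
    unfolding counterexample_points_def b_def using ex by (intro imageI) simp
  then have "b \<in> stage (Suc n) \<sigma>" by (simp add: stage_Suc closure_step_def)
  then have "b \<in> sub_dom \<sigma>" unfolding sub_dom_def by blast
  with all b show False by blast
qed

end

section \<open>A standard copy of the countable subframe\<close>

fun logrel :: "('s, 'u) frame \<Rightarrow> ('s, 'v) frame \<Rightarrow> ('s ty \<Rightarrow> 'v set) \<Rightarrow> ('s \<Rightarrow> 'v \<Rightarrow> 'u)
    \<Rightarrow> 's ty \<Rightarrow> 'u \<Rightarrow> 'v \<Rightarrow> bool" where
  "logrel FS F D \<psi> TO a b \<longleftrightarrow> (\<exists>p. a = tv FS p \<and> b = tv F p)"
| "logrel FS F D \<psi> (TB \<alpha>) a b \<longleftrightarrow> b \<in> D (TB \<alpha>) \<and> a = \<psi> \<alpha> b"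
| "logrel FS F D \<psi> (TF \<sigma> \<tau>) f g \<longleftrightarrow> f \<in> dom FS (TF \<sigma> \<tau>) \<and> g \<in> D (TF \<sigma> \<tau>) \<and>
      (\<forall>a b. logrel FS F D \<psi> \<sigma> a b \<longrightarrow> logrel FS F D \<psi> \<tau> (app FS f a) (app F g b))"

locale standard_copy = logical_interp F I for F :: "('s::countable, 'v) frame" and I +
  fixes FS :: "('s, 'u) frame" and \<psi> :: "'s \<Rightarrow> 'v \<Rightarrow> 'u"
  assumes standard: "standard FS" and tv_inj: "inj (tv FS)" and dom_TO: "dom FS TO = range (tv FS)"
    and bij: "\<And>\<alpha>. bij_betw (\<psi> \<alpha>) (sub_dom (TB \<alpha>)) (dom FS (TB \<alpha>))"
begin

abbreviation R where "R \<equiv> logrel FS F sub_dom \<psi>"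

lemma frame_S: "is_frame FS"
  using standard unfolding standard_def by blast

lemma R_dom: "R \<sigma> a b \<Longrightarrow> a \<in> dom FS \<sigma> \<and> b \<in> sub_dom \<sigma>"
  using dom_TO tv_in_sub_dom bij_betw_apply[OF bij] by (cases \<sigma>) auto

lemma R_tv: "R TO (tv FS p) (tv F p)"
  by auto

lemma R_fun_right_unique:
  assumes tot: "\<And>b. b \<in> sub_dom \<sigma> \<Longrightarrow> \<exists>a. R \<sigma> a b"
    and uniq: "\<And>a b b'. R \<tau> a b \<Longrightarrow> R \<tau> a b' \<Longrightarrow> b = b'"
    and g: "R (TF \<sigma> \<tau>) f g" and g': "R (TF \<sigma> \<tau>) f g'"
  shows "g = g'"
proof (rule sub_dom_ext)
  show "\<forall>b\<in>sub_dom \<sigma>. app F g b = app F g' b"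
  proof
    fix b assume "b \<in> sub_dom \<sigma>"
    then obtain a where "R \<sigma> a b" using tot by blast
    then have "R \<tau> (app FS f a) (app F g b)" "R \<tau> (app FS f a) (app F g' b)" using g g' by auto
    then show "app F g b = app F g' b" by (rule uniq)
  qed
qed (use g g' in auto)

lemma R_fun_total:
  assumes uniq: "\<And>a b b'. R \<sigma> a b \<Longrightarrow> R \<sigma> a b' \<Longrightarrow> b = b'"
    and tot: "\<And>b. b \<in> sub_dom \<tau> \<Longrightarrow> \<exists>a. R \<tau> a b"
    and g: "g \<in> sub_dom (TF \<sigma> \<tau>)"
  shows "\<exists>f. R (TF \<sigma> \<tau>) f g"
proof -
  obtain d where d: "d \<in> dom FS \<tau>" using frame_S unfolding is_frame_def by blast
  have "\<forall>a. \<exists>a'. a' \<in> dom FS \<tau> \<and> (\<forall>b. R \<sigma> a b \<longrightarrow> R \<tau> a' (app F g b))"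
  proof
    fix a
    show "\<exists>a'. a' \<in> dom FS \<tau> \<and> (\<forall>b. R \<sigma> a b \<longrightarrow> R \<tau> a' (app F g b))"
    proof (cases "\<exists>b. R \<sigma> a b")
      case True
      then obtain b where b: "R \<sigma> a b" ..
      have "app F g b \<in> sub_dom \<tau>" using app_in_sub_dom[OF g] R_dom[OF b] by simp
      then obtain a' where a': "R \<tau> a' (app F g b)" using tot by blast
      have "R \<tau> a' (app F g b')" if "R \<sigma> a b'" for b'
        using a' uniq[OF b that] by simp
      then show ?thesis using R_dom[OF a'] by blast
    next
      case False
      then show ?thesis using d by blast
    qed
  qed
  then obtain h where h: "\<forall>a. h a \<in> dom FS \<tau> \<and> (\<forall>b. R \<sigma> a b \<longrightarrow> R \<tau> (h a) (app F g b))"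
    by (rule choice[THEN exE])
  then obtain f where f: "f \<in> dom FS (TF \<sigma> \<tau>)" "\<forall>a\<in>dom FS \<sigma>. app FS f a = h a"
    using standard_fun[OF standard, of \<sigma> h \<tau>] by blast
  have "R \<tau> (app FS f a) (app F g b)" if "R \<sigma> a b" for a b
    using f(2) h R_dom[OF that] that by simp
  then have "R (TF \<sigma> \<tau>) f g" using f(1) g by simp
  then show ?thesis ..
qed

lemma R_right_unique_total:
  "(\<forall>a b b'. R \<sigma> a b \<longrightarrow> R \<sigma> a b' \<longrightarrow> b = b') \<and> (\<forall>b\<in>sub_dom \<sigma>. \<exists>a. R \<sigma> a b)"
proof (induction \<sigma>)
  case TO
  have "b = b'" if "R TO a b" "R TO a b'" for a b b'
    using that tv_inj by (auto dest: injD)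
  moreover have "\<exists>a. R TO a b" if b: "b \<in> sub_dom TO" for b
  proof -
    obtain p where "b = tv F p"
      using b sub_dom_subset_dom logical_dom_TO[OF logical] by blast
    then show ?thesis using R_tv by blast
  qed
  ultimately show ?case by blast
next
  case (TB \<alpha>)
  have "b = b'" if "R (TB \<alpha>) a b" "R (TB \<alpha>) a b'" for a b b'
    using that bij_betw_imp_inj_on[OF bij] by (auto dest: inj_onD)
  then show ?case by auto
next
  case (TF \<sigma> \<tau>)
  have "g = g'" if "R (TF \<sigma> \<tau>) f g" "R (TF \<sigma> \<tau>) f g'" for f g g'
    by (rule R_fun_right_unique[OF _ _ that]) (use TF.IH in blast)+
  moreover have "\<exists>f. R (TF \<sigma> \<tau>) f g" if "g \<in> sub_dom (TF \<sigma> \<tau>)" for g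
    by (rule R_fun_total[OF _ _ that]) (use TF.IH in blast)+
  ultimately show ?case by blast
qed

lemma R_right_unique: "R \<sigma> a b \<Longrightarrow> R \<sigma> a b' \<Longrightarrow> b = b'"
  using R_right_unique_total by blast

lemma R_total: "b \<in> sub_dom \<sigma> \<Longrightarrow> \<exists>a. R \<sigma> a b"
  using R_right_unique_total by blast

lemma eval_R:
  "tyof t = Some \<sigma> \<Longrightarrow> \<forall>x\<in>names_of t. R (nty x) (JS x) (J x) \<Longrightarrow>
   \<exists>a b. eval FS JS t = Some a \<and> eval F J t = Some b \<and> R \<sigma> a b"
proof (induction t arbitrary: \<sigma> JS J)
  case (Ap s u)
  obtain \<sigma>' where ts: "tyof s = Some (TF \<sigma>' \<sigma>)" and tu: "tyof u = Some \<sigma>'"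
    using Ap.prems(1) by (rule tyof_ApE)
  have "\<forall>x\<in>names_of s. R (nty x) (JS x) (J x)" "\<forall>x\<in>names_of u. R (nty x) (JS x) (J x)"
    using Ap.prems(2) by simp_all
  then obtain f g a b where f: "eval FS JS s = Some f" "eval F J s = Some g" "R (TF \<sigma>' \<sigma>) f g"
    and a: "eval FS JS u = Some a" "eval F J u = Some b" "R \<sigma>' a b"
    using Ap.IH(1)[OF ts] Ap.IH(2)[OF tu] by meson
  then have "R \<sigma> (app FS f a) (app F g b)" by simp
  then show ?case using f a by simp
next
  case (Lm x s)
  obtain \<tau> where ts: "tyof s = Some \<tau>" and \<sigma>: "\<sigma> = TF (nty x) \<tau>"
    using Lm.prems(1) by (rule tyof_LmE)
  have JS: "\<forall>y\<in>names_of (Lm x s). JS y \<in> dom FS (nty y)"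
    and J: "\<forall>y\<in>names_of (Lm x s). J y \<in> sub_dom (nty y)"
    using Lm.prems(2) R_dom by blast+
  obtain f where f: "eval FS JS (Lm x s) = Some f"
    using standard_eval_defined[OF standard Lm.prems(1) JS] by blast
  obtain g where g: "eval F J (Lm x s) = Some g"
    using interp_eval_defined[OF interp] Lm.prems(1) J sub_dom_subset_dom unfolding wt_def by blast
  have "R \<tau> (app FS f a) (app F g b)" if ab: "R (nty x) a b" for a b
  proof -
    have "\<forall>y\<in>names_of s. R (nty y) ((JS(x := a)) y) ((J(x := b)) y)"
      using Lm.prems(2) ab by auto
    then obtain a' b' where a': "eval FS (JS(x := a)) s = Some a'"
      and b': "eval F (J(x := b)) s = Some b'" and "R \<tau> a' b'"
      using Lm.IH[OF ts] by blast
    moreover have "eval FS (JS(x := a)) s = Some (app FS f a)"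
      using eval_LmD(2)[OF frame_S ts f] R_dom[OF ab] by blast
    moreover have "eval F (J(x := b)) s = Some (app F g b)"
      using eval_LmD(2)[OF frame ts g] R_dom[OF ab] sub_dom_subset_dom by blast
    ultimately show ?thesis by simp
  qed
  then have "R \<sigma> f g"
    using \<sigma> eval_LmD(1)[OF frame_S ts f] eval_in_sub_dom[OF Lm.prems(1) J g] by simp
  then show ?case using f g by blast
qed simp

definition std_interp :: "'s name \<Rightarrow> 'u" where
  "std_interp = (SOME IS. logical FS IS \<and> (\<forall>\<sigma> n. R \<sigma> (IS (NVar \<sigma> n)) (I (NVar \<sigma> n))))"

lemma std_interp: "logical FS std_interp" "R \<sigma> (std_interp (NVar \<sigma> n)) (I (NVar \<sigma> n))"
proof -
  define J where "J x = (SOME a. R (nty x) a (I x))" for x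
  have J: "R \<sigma> (J (NVar \<sigma> n)) (I (NVar \<sigma> n))" for \<sigma> n
  proof -
    have "\<exists>a. R \<sigma> a (I (NVar \<sigma> n))" using R_total interp_in_sub_dom[of "NVar \<sigma> n"] by simp
    then show ?thesis unfolding J_def nty.simps by (rule someI_ex)
  qed
  then have "J (NVar \<sigma> n) \<in> dom FS \<sigma>" for \<sigma> n using R_dom by blast
  then obtain IS where IS: "logical FS IS" "\<And>\<sigma> n. IS (NVar \<sigma> n) = J (NVar \<sigma> n)"
    using standard_logical_extension[OF standard tv_inj dom_TO] by blast
  then have "\<exists>IS. logical FS IS \<and> (\<forall>\<sigma> n. R \<sigma> (IS (NVar \<sigma> n)) (I (NVar \<sigma> n)))"
    using J by (intro exI[of _ IS]) simp
  from someI_ex[OF this] show "logical FS std_interp" "R \<sigma> (std_interp (NVar \<sigma> n)) (I (NVar \<sigma> n))"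
    unfolding std_interp_def by blast+
qed

lemma countable_sort_dom: "countable (dom FS (TB \<alpha>))"
proof -
  have "countable (\<psi> \<alpha> ` sub_dom (TB \<alpha>))" by (rule countable_image[OF countable_sub_dom])
  then show ?thesis using bij_betw_imp_surj_on[OF bij] by simp
qed

lemma std_interp_in_dom: "std_interp x \<in> dom FS (nty x)"
  using logical_assignment[OF std_interp(1)] unfolding assignment_def by blast

lemma R_neg: "R (TF TO TO) (std_interp NNeg) (I NNeg)"
  using std_interp_in_dom[of NNeg] interp_in_sub_dom[of NNeg]
  by (auto simp: logical_neg[OF std_interp(1)] logical_neg[OF logical])

lemma R_imp: "R (TF TO (TF TO TO)) (std_interp NImp) (I NImp)"
proof -
  have "R TO (app FS (app FS (std_interp NImp) (tv FS p)) (tv FS q))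
      (app F (app F (I NImp) (tv F p)) (tv F q))" for p q
    unfolding logical_imp[OF std_interp(1)] logical_imp[OF logical] by (rule R_tv)
  moreover have "app FS (std_interp NImp) (tv FS p) \<in> dom FS (TF TO TO)" for p
    using frame_app_in_dom[OF frame_S] std_interp_in_dom[of NImp] dom_TO by simp
  moreover have "app F (I NImp) (tv F p) \<in> sub_dom (TF TO TO)" for p
    using app_in_sub_dom interp_in_sub_dom[of NImp] tv_in_sub_dom by simp
  ultimately show ?thesis using std_interp_in_dom[of NImp] interp_in_sub_dom[of NImp] by auto
qed

lemma R_eq: "R (TF (TB \<alpha>) (TF (TB \<alpha>) TO)) (std_interp (NEq (TB \<alpha>))) (I (NEq (TB \<alpha>)))"
proof -
  let ?eqS = "std_interp (NEq (TB \<alpha>))" and ?eqH = "I (NEq (TB \<alpha>))"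
  have dom: "\<psi> \<alpha> b \<in> dom FS (TB \<alpha>)" "b \<in> dom F (TB \<alpha>)" if "b \<in> sub_dom (TB \<alpha>)" for b
    using that bij_betw_apply[OF bij] sub_dom_subset_dom by blast+
  have "R (TF (TB \<alpha>) TO) (app FS ?eqS (\<psi> \<alpha> b)) (app F ?eqH b)" if b: "b \<in> sub_dom (TB \<alpha>)" for b
  proof -
    have "app FS ?eqS (\<psi> \<alpha> b) \<in> dom FS (TF (TB \<alpha>) TO)"
      using frame_app_in_dom[OF frame_S] std_interp_in_dom[of "NEq (TB \<alpha>)"] dom(1)[OF b] by simp
    moreover have "app F ?eqH b \<in> sub_dom (TF (TB \<alpha>) TO)"
      using app_in_sub_dom interp_in_sub_dom[of "NEq (TB \<alpha>)"] b by simp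
    moreover have "R TO (app FS (app FS ?eqS (\<psi> \<alpha> b)) (\<psi> \<alpha> b')) (app F (app F ?eqH b) b')"
      if b': "b' \<in> sub_dom (TB \<alpha>)" for b'
    proof -
      have "\<psi> \<alpha> b = \<psi> \<alpha> b' \<longleftrightarrow> b = b'"
        using b b' bij_betw_imp_inj_on[OF bij] by (auto dest: inj_onD)
      then have eqS: "app FS (app FS ?eqS (\<psi> \<alpha> b)) (\<psi> \<alpha> b') = tv FS (b = b')"
        using logical_eq[OF std_interp(1) dom(1)[OF b] dom(1)[OF b']] by simp
      have eqH: "app F (app F ?eqH b) b' = tv F (b = b')"
        using logical_eq[OF logical dom(2)[OF b] dom(2)[OF b']] .
      show ?thesis unfolding eqS eqH by (rule R_tv)
    qed
    ultimately show ?thesis by auto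
  qed
  then show ?thesis
    using std_interp_in_dom[of "NEq (TB \<alpha>)"] interp_in_sub_dom[of "NEq (TB \<alpha>)"] by auto
qed

lemma R_all: "R (TF (TF (TB \<alpha>) TO) TO) (std_interp (NAll \<alpha>)) (I (NAll \<alpha>))"
proof -
  have "R TO (app FS (std_interp (NAll \<alpha>)) gS) (app F (I (NAll \<alpha>)) g)"
    if r: "R (TF (TB \<alpha>) TO) gS g" for gS g
  proof -
    have gS: "gS \<in> dom FS (TF (TB \<alpha>) TO)" and g: "g \<in> sub_dom (TF (TB \<alpha>) TO)" using r by auto
    have pointwise: "app FS gS (\<psi> \<alpha> b) = tv FS True \<longleftrightarrow> app F g b = tv F True"
      if b: "b \<in> sub_dom (TB \<alpha>)" for b
    proof -
      have "R TO (app FS gS (\<psi> \<alpha> b)) (app F g b)" using r b by simp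
      then obtain p where "app FS gS (\<psi> \<alpha> b) = tv FS p" "app F g b = tv F p" by auto
      then show ?thesis using logical_tv_inj[OF std_interp(1)] logical_tv_inj[OF logical] by simp
    qed
    have "(\<forall>a\<in>dom FS (TB \<alpha>). app FS gS a = tv FS True)
        \<longleftrightarrow> (\<forall>b\<in>sub_dom (TB \<alpha>). app FS gS (\<psi> \<alpha> b) = tv FS True)"
      unfolding bij_betw_imp_surj_on[OF bij, symmetric] by simp
    also have "\<dots> \<longleftrightarrow> (\<forall>b\<in>sub_dom (TB \<alpha>). app F g b = tv F True)"
      using pointwise by simp
    also have "\<dots> \<longleftrightarrow> (\<forall>b\<in>dom F (TB \<alpha>). app F g b = tv F True)"
      using sub_dom_counterexample[OF g] sub_dom_subset_dom by blast
    finally have quant: "(\<forall>a\<in>dom FS (TB \<alpha>). app FS gS a = tv FS True)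
        \<longleftrightarrow> (\<forall>b\<in>dom F (TB \<alpha>). app F g b = tv F True)" .
    have gH: "g \<in> dom F (TF (TB \<alpha>) TO)" using g sub_dom_subset_dom by blast
    show ?thesis
      unfolding logical_all[OF std_interp(1) gS] logical_all[OF logical gH] quant by (rule R_tv)
  qed
  then show ?thesis
    using std_interp_in_dom[of "NAll \<alpha>"] interp_in_sub_dom[of "NAll \<alpha>"] by auto
qed

lemma R_EFO_names:
  assumes "EFO t" and "x \<in> names_of t"
  shows "R (nty x) (std_interp x) (I x)"
proof -
  from assms consider \<sigma> n where "x = NVar \<sigma> n" | "x = NNeg" | "x = NImp"
    | \<alpha> where "x = NEq (TB \<alpha>)" | \<alpha> where "x = NAll \<alpha>"
    unfolding EFO_def is_var_def by blast
  then show ?thesis using std_interp(2) R_neg R_imp R_eq R_all by cases simp_all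
qed

lemma EFO_eval_R:
  assumes "EFO t" and "tyof t = Some \<sigma>"
  obtains a b where "eval FS std_interp t = Some a" "eval F I t = Some b" "R \<sigma> a b"
  using eval_R[OF assms(2)] R_EFO_names[OF assms(1)] by blast

text \<open>For a disequation the relation is used at an arbitrary type \<sigma>, where it need not be
  injective; right-uniqueness suffices, since the disequation is true in the interpretation.\<close>

lemma quasi_EFO_true_transfer:
  assumes "quasi_EFO s" and "eval F I s = Some (tv F True)"
  shows "eval FS std_interp s = Some (tv FS True)"
proof -
  have ty: "tyof s = Some TO" using assms(1) unfolding quasi_EFO_def formula_def by blast
  note tvH = logical_tv_inj[OF logical]
  from assms(1) consider "EFO s"
    | \<sigma> t u where "s = Ap (Nm NNeg) (Ap (Ap (Nm (NEq \<sigma>)) t) u)" "EFO t" "EFO u"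
    unfolding quasi_EFO_def by blast
  then show ?thesis
  proof cases
    case 1
    obtain a b where "eval FS std_interp s = Some a" "eval F I s = Some b" "R TO a b"
      using EFO_eval_R[OF 1 ty] by blast
    then obtain p where "eval FS std_interp s = Some (tv FS p)" "eval F I s = Some (tv F p)" by auto
    then show ?thesis using assms(2) tvH by simp
  next
    case (2 \<sigma> t u)
    have "tyof t = Some \<sigma>" "tyof u = Some \<sigma>"
      using ty unfolding 2(1) by (auto split: option.splits ty.splits if_splits)
    obtain a1 b1 where t: "eval FS std_interp t = Some a1" "eval F I t = Some b1" "R \<sigma> a1 b1"
      using EFO_eval_R[OF 2(2) \<open>tyof t = Some \<sigma>\<close>] by blast
    obtain a2 b2 where u: "eval FS std_interp u = Some a2" "eval F I u = Some b2" "R \<sigma> a2 b2"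
      using EFO_eval_R[OF 2(3) \<open>tyof u = Some \<sigma>\<close>] by blast
    have a: "a1 \<in> dom FS \<sigma>" "a2 \<in> dom FS \<sigma>" using R_dom[OF t(3)] R_dom[OF u(3)] by blast+
    have b: "b1 \<in> dom F \<sigma>" "b2 \<in> dom F \<sigma>"
      using R_dom[OF t(3)] R_dom[OF u(3)] sub_dom_subset_dom by blast+
    have "eval F I s = Some (tv F (b1 \<noteq> b2))"
      using t u unfolding 2(1) by (simp add: logical_eq[OF logical b] logical_neg[OF logical])
    then have "b1 \<noteq> b2" using assms(2) tvH by simp
    then have "a1 \<noteq> a2" using R_right_unique[of \<sigma> a1 b1 b2] t(3) u(3) by blast
    then show ?thesis
      using t u unfolding 2(1) by (simp add: logical_eq[OF std_interp(1) a] logical_neg[OF std_interp(1)])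
  qed
qed

end

lemma hosts_standard_framesE:
  fixes D :: "'s::countable \<Rightarrow> 'v set"
  assumes "hosts_standard_frames TYPE('u) TYPE('s)"
    and countable: "\<And>\<alpha>. countable (D \<alpha>)" and nonempty: "\<And>\<alpha>. D \<alpha> \<noteq> {}"
  obtains FS :: "('s, 'u) frame" and \<psi>
  where "standard FS" "inj (tv FS)" "dom FS TO = range (tv FS)"
    and "\<And>\<alpha>. bij_betw (\<psi> \<alpha>) (D \<alpha>) (dom FS (TB \<alpha>))"
proof -
  define c where "c \<alpha> = to_nat_on (D \<alpha>) ` D \<alpha>" for \<alpha>
  have "\<forall>\<alpha>. c \<alpha> \<noteq> {}" using nonempty by (simp add: c_def)
  then obtain FS :: "('s, 'u) frame" where FS: "standard FS" "inj (tv FS)" "dom FS TO = range (tv FS)"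
    and "\<forall>\<alpha>. \<exists>G. bij_betw G (c \<alpha>) (dom FS (TB \<alpha>))"
    using assms(1) unfolding hosts_standard_frames_def by blast
  then obtain G where G: "\<And>\<alpha>. bij_betw (G \<alpha>) (c \<alpha>) (dom FS (TB \<alpha>))" by metis
  have "bij_betw (to_nat_on (D \<alpha>)) (D \<alpha>) (c \<alpha>)" for \<alpha>
    using inj_on_to_nat_on[OF countable] by (simp add: bij_betw_def c_def)
  then have "bij_betw (G \<alpha> \<circ> to_nat_on (D \<alpha>)) (D \<alpha>) (dom FS (TB \<alpha>))" for \<alpha>
    using G by (rule bij_betw_trans)
  then show thesis by (rule that[OF FS])
qed

theorem corollary14p7:
  fixes nf :: "'s::countable tm \<Rightarrow> 's tm"
    and sb :: "('s name \<Rightarrow> 's tm option) \<Rightarrow> 's tm \<Rightarrow> 's tm"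
    and A :: "'s tm set"
  assumes N123: "norm_syntactic nf"
    and N4v: "norm_sound TYPE('v) nf"
    and N4u: "norm_sound TYPE('u) nf"
    and S: "subst_ok nf sb"
    and big: "hosts_standard_frames TYPE('u) TYPE('s)"
    and branch: "EFO_branch nf A"
    and sat: "satisfied_in TYPE('v) A"
  shows "\<exists>(F :: ('s, 'u) frame) I. assignment F I \<and> standard_model F I A
            \<and> (\<forall>\<alpha>. countable (dom F (TB \<alpha>)))"
proof -
  obtain F :: "('s, 'v) frame" and I where "is_interp F I" "logical F I" and models: "models F I A"
    using sat unfolding satisfied_in_def by blast
  then interpret logical_interp F I by unfold_locales
  have "sub_dom (TB \<alpha>) \<noteq> {}" for \<alpha> using interp_in_sub_dom[of "NVar (TB \<alpha>) 0"] by auto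
  then obtain FS :: "('s, 'u) frame" and \<psi> where FS: "standard FS" "inj (tv FS)" "dom FS TO = range (tv FS)"
    and \<psi>: "\<And>\<alpha>. bij_betw (\<psi> \<alpha>) (sub_dom (TB \<alpha>)) (dom FS (TB \<alpha>))"
    using hosts_standard_framesE[OF big countable_sub_dom] by blast
  interpret standard_copy F I FS \<psi> using FS \<psi> by unfold_locales
  have "models FS std_interp A"
    using models branch quasi_EFO_true_transfer
    unfolding models_def EFO_branch_def by blast
  then show ?thesis
    using FS(1) std_interp(1) logical_assignment countable_sort_dom
    unfolding standard_model_def by blast
qed

end
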